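(* Let $r_n$ be the number of recursively labelled red and white trees with $n$ labels, and $F(x)=\sum_{n\ge1}r_nx^n$. Then $F=x+2xF+2F^2$. (The first values are $1,4,24,176,1440,\dots$.)
   Context: A labelled red and white tree with $n$ labels is a finite rooted tree (children unordered) in which each node $z$ carries a possibly empty label set $L(z)\subseteq[n]$, the sets $L(z)$ partitioning $[n]$, and every node with empty label set has at least two children; colours (red/white) are determined by these data (a labelled node is white, an empty node is red iff all its children are white) and do not affect counting. It is recursively labelled if for every node $z$ the union of the label sets of the nodes of the subtree rooted at $z$ is an interval of consecutive integers. *)

theory Defs
  imports "HOL-Library.Multiset" "HOL-Computational_Algebra.Formal_Power_Series"
begin

text \<open>A rooted tree with unordered children; each node carries a label set.
  Colours are determined by the data and are irrelevant for counting, so they are omitted.\<close>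
datatype rwtree = Node "nat set" "rwtree multiset"

lemma size_mem_lt_size_multiset [termination_simp]:
  "x \<in># M \<Longrightarrow> f x < Suc (size_multiset f M)"
  proof -
  assume "x \<in># M"
  then obtain N where "M = add_mset x N" by (metis insert_DiffM)
  then show ?thesis by simp
qed

fun labels :: "rwtree \<Rightarrow> nat set" where
  "labels (Node L cs) = L \<union> (\<Union>c\<in>set_mset cs. labels c)"

fun wf_rwtree :: "rwtree \<Rightarrow> bool" where
  "wf_rwtree (Node L cs) =
     ((L = {} \<longrightarrow> size cs \<ge> 2) \<and>
      (\<forall>c\<in>set_mset cs. wf_rwtree c \<and> L \<inter> labels c = {}) \<and>
      (\<forall>a b M. cs = {#a, b#} + M \<longrightarrow> labels a \<inter> labels b = {}))"

fun rec_labelled :: "rwtree \<Rightarrow> bool" where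
  "rec_labelled (Node L cs) =
     ((\<exists>a b. labels (Node L cs) = {a..b}) \<and> (\<forall>c\<in>set_mset cs. rec_labelled c))"

definition rw_trees :: "nat \<Rightarrow> rwtree set" where
  "rw_trees n = {t. wf_rwtree t \<and> labels t = {1..n}}"

definition r :: "nat \<Rightarrow> nat" where
  "r n = card {t \<in> rw_trees n. rec_labelled t}"

end

theory Submission
  imports Defs
begin

text \<open>Split a recursively labelled tree on the interval \<open>{a..b}\<close> at its least label \<open>a\<close>.
  Either \<open>a\<close> labels the root, and removing it leaves a root label set together with a
  multiset of subtrees covering \<open>{a+1..b}\<close>; or \<open>a\<close> lies in a unique subtree, whose labels
  form an initial segment \<open>{a..m}\<close> with \<open>m < b\<close>, and the rest is such a root on \<open>{m+1..b}\<close>.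
  A root on a nonempty interval is either a tree or a single tree below an empty root, and
  on the empty interval it is empty, so roots are counted by \<open>S = 1 + 2F\<close>. The two cases
  give \<open>F = x S + F (S - 1)\<close>, which is \<open>F = x + 2xF + 2F\<^sup>2\<close>.\<close>

definition rl_tree :: "rwtree \<Rightarrow> bool" where
  "rl_tree t \<longleftrightarrow> wf_rwtree t \<and> rec_labelled t"

definition rl_trees :: "nat set \<Rightarrow> rwtree set" where
  "rl_trees I = {t. rl_tree t \<and> labels t = I}"

definition node_labels :: "nat set \<Rightarrow> rwtree multiset \<Rightarrow> nat set" where
  "node_labels L cs = L \<union> (\<Union>c\<in>set_mset cs. labels c)"

definition disjoint_children :: "nat set \<Rightarrow> rwtree multiset \<Rightarrow> bool" where
  "disjoint_children L cs \<longleftrightarrow>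
     (\<forall>c\<in>#cs. rl_tree c \<and> L \<inter> labels c = {}) \<and>
     (\<forall>c\<in>#cs. \<forall>d\<in>#cs - {#c#}. labels c \<inter> labels d = {})"

definition rl_roots :: "nat set \<Rightarrow> (nat set \<times> rwtree multiset) set" where
  "rl_roots I = {(L, cs). disjoint_children L cs \<and> node_labels L cs = I}"

lemma pairwise_mset_iff:
  "(\<forall>a b M. cs = {#a, b#} + M \<longrightarrow> P a b) \<longleftrightarrow> (\<forall>c\<in>#cs. \<forall>d\<in>#cs - {#c#}. P c d)"
proof
  assume H: "\<forall>a b M. cs = {#a, b#} + M \<longrightarrow> P a b"
  show "\<forall>c\<in>#cs. \<forall>d\<in>#cs - {#c#}. P c d"
  proof (intro ballI)
    fix c d assume "c \<in># cs" and "d \<in># cs - {#c#}"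
    then have "cs = add_mset c (add_mset d (cs - {#c#} - {#d#}))"
      by (metis insert_DiffM)
    then have "cs = {#c, d#} + (cs - {#c#} - {#d#})"
      by simp
    then show "P c d" using H by blast
  qed
qed auto

lemma rl_trees_Node:
  "Node L cs \<in> rl_trees I \<longleftrightarrow>
     (L = {} \<longrightarrow> 2 \<le> size cs) \<and> disjoint_children L cs \<and> node_labels L cs = I \<and> (\<exists>a b. I = {a..b})"
  unfolding rl_trees_def rl_tree_def disjoint_children_def node_labels_def
  by (simp only: wf_rwtree.simps rec_labelled.simps pairwise_mset_iff mem_Collect_eq) auto

lemma Node_in_rl_trees_interval:
  "Node L cs \<in> rl_trees {a..b} \<longleftrightarrow>
     (L = {} \<longrightarrow> 2 \<le> size cs) \<and> disjoint_children L cs \<and> node_labels L cs = {a..b}"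
  by (auto simp: rl_trees_Node)

lemma wf_labels_nonempty: "wf_rwtree t \<Longrightarrow> labels t \<noteq> {}"
proof (induction t)
  case (Node L cs)
  show ?case
  proof (cases "L = {}")
    case True
    with Node.prems have "cs \<noteq> {#}" by auto
    then obtain c where "c \<in># cs" by (meson multiset_nonemptyE)
    with Node show ?thesis by auto
  qed simp
qed

lemma rl_trees_nonempty_labels: "t \<in> rl_trees I \<Longrightarrow> I \<noteq> {}"
  using wf_labels_nonempty by (auto simp: rl_trees_def rl_tree_def)

lemma rl_trees_empty [simp]: "rl_trees {} = {}"
  using rl_trees_nonempty_labels by blast

section \<open>Shifting labels\<close>

fun map_labels :: "(nat \<Rightarrow> nat) \<Rightarrow> rwtree \<Rightarrow> rwtree" where
  "map_labels f (Node L cs) = Node (f ` L) (image_mset (map_labels f) cs)"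

lemma labels_map_labels: "labels (map_labels f t) = f ` labels t"
  by (induction t) (auto simp: image_Union)

lemma map_labels_map_labels: "map_labels f (map_labels g t) = map_labels (f \<circ> g) t"
  by (induction t) (auto simp: image_image multiset.map_comp intro!: multiset.map_cong0)

lemma map_labels_ident: "\<forall>x\<in>labels t. f x = x \<Longrightarrow> map_labels f t = t"
proof (induction t)
  case (Node L cs)
  then have "image_mset (map_labels f) cs = cs"
    by (intro multiset.map_ident_strong) auto
  with Node.prems show ?case by simp
qed

lemma wf_map_labels: "inj f \<Longrightarrow> wf_rwtree (map_labels f t) = wf_rwtree t"
proof (induction t)
  case (Node L cs)
  have Diff: "image_mset (map_labels f) cs - {#map_labels f c#} = image_mset (map_labels f) (cs - {#c#})"
    if "c \<in># cs" for c
    using that by (simp add: image_mset_Diff)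
  show ?case
    using Node by (simp only: map_labels.simps wf_rwtree.simps pairwise_mset_iff)
      (auto simp: Diff labels_map_labels image_Int[symmetric])
qed

lemma shift_interval_iff: "(\<exists>a b. (+) (d::nat) ` S = {a..b}) \<longleftrightarrow> (\<exists>a b. S = {a..b})"
proof
  assume "\<exists>a b. (+) d ` S = {a..b}"
  then obtain a b where ab: "(+) d ` S = {a..b}" by blast
  show "\<exists>a b. S = {a..b}"
  proof (cases "a \<le> b")
    case True
    then have "a \<in> (+) d ` S" using ab by simp
    then have "d \<le> a" by auto
    then have "(+) d ` S = (+) d ` {a - d..b - d}" using ab True by simp
    then have "S = {a - d..b - d}" by (meson inj_image_eq_iff inj_on_add)
    then show ?thesis by blast
  next
    case False
    then have "(+) d ` S = {}" using ab by simp
    then have "S = {}" by simp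
    then show ?thesis by (intro exI[of _ 1] exI[of _ 0]) simp
  qed
next
  assume "\<exists>a b. S = {a..b}"
  then obtain a b where "S = {a..b}" by blast
  then have "(+) d ` S = {a + d..b + d}" by simp
  then show "\<exists>a b. (+) d ` S = {a..b}" by blast
qed

lemma rec_labelled_shift: "rec_labelled (map_labels ((+) d) t) = rec_labelled t"
proof (induction t)
  case (Node L cs)
  have "labels (map_labels ((+) d) (Node L cs)) = (+) d ` labels (Node L cs)"
    by (rule labels_map_labels)
  then have "(\<exists>a b. labels (map_labels ((+) d) (Node L cs)) = {a..b}) \<longleftrightarrow> (\<exists>a b. labels (Node L cs) = {a..b})"
    using shift_interval_iff by metis
  with Node.IH show ?case by (simp del: labels.simps)
qed

lemma rl_tree_shift: "rl_tree (map_labels ((+) d) t) = rl_tree t"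
  by (simp add: rl_tree_def wf_map_labels rec_labelled_shift)

lemma card_rl_trees_shift: "card (rl_trees ((+) d ` I)) = card (rl_trees I)"
proof -
  have unshift: "map_labels ((+) d) (map_labels (\<lambda>x. x - d) t) = t" if "t \<in> rl_trees ((+) d ` I)" for t
    using that by (auto simp: rl_trees_def map_labels_map_labels intro!: map_labels_ident)
  have "bij_betw (map_labels ((+) d)) (rl_trees I) (rl_trees ((+) d ` I))"
  proof (rule bij_betw_byWitness[where f' = "map_labels (\<lambda>x. x - d)"])
    show "\<forall>t\<in>rl_trees I. map_labels (\<lambda>x. x - d) (map_labels ((+) d) t) = t"
      by (simp add: map_labels_map_labels map_labels_ident)
    show "\<forall>t\<in>rl_trees ((+) d ` I). map_labels ((+) d) (map_labels (\<lambda>x. x - d) t) = t"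
      using unshift by blast
    show "map_labels ((+) d) ` rl_trees I \<subseteq> rl_trees ((+) d ` I)"
      by (auto simp: rl_trees_def rl_tree_shift labels_map_labels)
    show "map_labels (\<lambda>x. x - d) ` rl_trees ((+) d ` I) \<subseteq> rl_trees I"
    proof
      fix s assume "s \<in> map_labels (\<lambda>x. x - d) ` rl_trees ((+) d ` I)"
      then obtain t where t: "t \<in> rl_trees ((+) d ` I)" and s: "s = map_labels (\<lambda>x. x - d) t"
        by blast
      with unshift have t_eq: "t = map_labels ((+) d) s" by simp
      with t have "(+) d ` labels s = (+) d ` I"
        by (simp add: rl_trees_def labels_map_labels)
      then have "labels s = I" by (meson inj_image_eq_iff inj_on_add)
      with t t_eq show "s \<in> rl_trees I" by (simp add: rl_trees_def rl_tree_shift)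
    qed
  qed
  then show ?thesis by (simp add: bij_betw_same_card)
qed

lemma r_eq_card: "r n = card (rl_trees {1..n})"
  unfolding r_def by (rule arg_cong[where f = card]) (auto simp: rw_trees_def rl_trees_def rl_tree_def)

lemma r_0: "r 0 = 0"
  by (simp add: r_eq_card)

lemma card_rl_trees_interval: "card (rl_trees {Suc m..n}) = r (n - m)"
proof -
  have "{Suc m..n} = (+) m ` {1..n - m}" by (cases "m \<le> n") auto
  then show ?thesis by (simp only: card_rl_trees_shift r_eq_card)
qed

lemma rl_trees_eq_Node_image:
  "rl_trees {x..y} = case_prod Node ` {(L, cs) \<in> rl_roots {x..y}. L = {} \<longrightarrow> 2 \<le> size cs}"
proof (intro equalityI subsetI)
  fix t assume t: "t \<in> rl_trees {x..y}"
  obtain L cs where "t = Node L cs" by (cases t)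
  with t show "t \<in> case_prod Node ` {(L, cs) \<in> rl_roots {x..y}. L = {} \<longrightarrow> 2 \<le> size cs}"
    by (auto simp: Node_in_rl_trees_interval rl_roots_def)
qed (auto simp: Node_in_rl_trees_interval rl_roots_def)

lemma rl_roots_split:
  "rl_roots I = {(L, cs) \<in> rl_roots I. L = {} \<longrightarrow> 2 \<le> size cs} \<union>
     (\<lambda>t. ({}, {#t#})) ` rl_trees I \<union> (if I = {} then {({}, {#})} else {})"
proof (intro equalityI subsetI)
  fix p assume p: "p \<in> rl_roots I"
  obtain L cs where p_eq: "p = (L, cs)" by fastforce
  consider "L \<noteq> {} \<or> 2 \<le> size cs" | "L = {}" "cs = {#}" | c where "L = {}" "cs = {#c#}"
    by (metis One_nat_def less_2_cases_iff linorder_not_le size_1_singleton_mset size_eq_0_iff_empty)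
  then show "p \<in> {(L, cs) \<in> rl_roots I. L = {} \<longrightarrow> 2 \<le> size cs} \<union>
     (\<lambda>t. ({}, {#t#})) ` rl_trees I \<union> (if I = {} then {({}, {#})} else {})"
    by cases (use p p_eq in \<open>auto simp: rl_roots_def node_labels_def disjoint_children_def rl_trees_def\<close>)
qed (auto simp: rl_roots_def node_labels_def disjoint_children_def rl_trees_def split: if_splits)

lemma card_rl_roots:
  assumes "finite (rl_trees {x..y})"
  shows "finite (rl_roots {x..y})"
    and "card (rl_roots {x..y}) = 2 * card (rl_trees {x..y}) + (if y < x then 1 else 0)"
proof -
  define P where "P = {(L, cs) \<in> rl_roots {x..y}. L = {} \<longrightarrow> 2 \<le> size cs}"
  define S :: "(nat set \<times> rwtree multiset) set" where "S = (\<lambda>t. ({}, {#t#})) ` rl_trees {x..y}"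
  define E :: "(nat set \<times> rwtree multiset) set" where "E = (if {x..y} = {} then {({}, {#})} else {})"
  have "inj_on (case_prod Node) P" by (auto simp: inj_on_def)
  then have P: "finite P" "card P = card (rl_trees {x..y})"
    using assms by (simp_all add: P_def rl_trees_eq_Node_image finite_image_iff card_image)
  have S: "finite S" "card S = card (rl_trees {x..y})"
    using assms by (simp_all add: S_def card_image inj_on_def)
  have "P \<inter> S = {}" by (auto simp: P_def S_def)
  with P S have PS: "finite (P \<union> S)" "card (P \<union> S) = 2 * card (rl_trees {x..y})"
    by (simp_all add: card_Un_disjoint)
  have E: "finite E" "card E = (if y < x then 1 else 0)" "(P \<union> S) \<inter> E = {}"
    by (auto simp: E_def P_def S_def rl_roots_def node_labels_def)
  have split: "rl_roots {x..y} = (P \<union> S) \<union> E"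
    unfolding P_def S_def E_def by (rule rl_roots_split)
  show "finite (rl_roots {x..y})"
    using PS E by (simp add: split)
  show "card (rl_roots {x..y}) = 2 * card (rl_trees {x..y}) + (if y < x then 1 else 0)"
    using PS E by (simp add: split card_Un_disjoint)
qed

lemma node_labels_add_mset [simp]: "node_labels L (add_mset c cs) = labels c \<union> node_labels L cs"
  by (auto simp: node_labels_def)

lemma pairwise_mset_add_mset:
  assumes sym: "\<And>x y. P x y \<Longrightarrow> P y x"
  shows "(\<forall>x\<in>#add_mset c cs. \<forall>y\<in>#add_mset c cs - {#x#}. P x y) \<longleftrightarrow>
         (\<forall>x\<in>#cs. \<forall>y\<in>#cs - {#x#}. P x y) \<and> (\<forall>d\<in>#cs. P c d)"
proof safe
  fix x y
  assume "\<forall>x\<in>#add_mset c cs. \<forall>y\<in>#add_mset c cs - {#x#}. P x y" "x \<in># cs" "y \<in># cs - {#x#}"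
  then show "P x y" by (simp add: in_diff_count)
next
  fix d
  assume "\<forall>x\<in>#add_mset c cs. \<forall>y\<in>#add_mset c cs - {#x#}. P x y" "d \<in># cs"
  then show "P c d" by simp
next
  fix x y
  assume pw: "\<forall>x\<in>#cs. \<forall>y\<in>#cs - {#x#}. P x y" and c: "\<forall>d\<in>#cs. P c d"
    and x: "x \<in># add_mset c cs" and y: "y \<in># add_mset c cs - {#x#}"
  show "P x y"
  proof (cases "x = c")
    case False
    with x y have "x \<in># cs" "y = c \<or> y \<in># cs - {#x#}" by auto
    with pw c sym show ?thesis by blast
  qed (use y c in simp)
qed

lemma disjoint_children_add_mset:
  "disjoint_children L (add_mset c cs) \<longleftrightarrow>
     disjoint_children L cs \<and> rl_tree c \<and> L \<inter> labels c = {} \<and> (\<forall>d\<in>#cs. labels c \<inter> labels d = {})"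
  using pairwise_mset_add_mset[of "\<lambda>x y. labels x \<inter> labels y = {}" c cs]
  by (auto simp: disjoint_children_def)

lemma node_labels_insert [simp]: "node_labels (insert a L) cs = insert a (node_labels L cs)"
  by (auto simp: node_labels_def)

lemma child_labels_subset: "c \<in># cs \<Longrightarrow> labels c \<subseteq> node_labels L cs"
  by (auto simp: node_labels_def)

lemma node_labels_eq_empty_iff:
  assumes "disjoint_children L cs"
  shows "node_labels L cs = {} \<longleftrightarrow> L = {} \<and> cs = {#}"
proof
  assume empty: "node_labels L cs = {}"
  have "cs = {#}"
  proof (rule ccontr)
    assume "cs \<noteq> {#}"
    then obtain c where c: "c \<in># cs" by (meson multiset_nonemptyE)
    with assms have "labels c \<noteq> {}"
      using wf_labels_nonempty by (simp add: disjoint_children_def rl_tree_def)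
    with c empty show False using child_labels_subset by blast
  qed
  with empty show "L = {} \<and> cs = {#}" by (simp add: node_labels_def)
qed (simp add: node_labels_def)

section \<open>Decomposition at the least label\<close>

lemma Node_insert_min_in_rl_trees:
  assumes "(L, cs) \<in> rl_roots {Suc a..b}" and "a \<le> b"
  shows "Node (insert a L) cs \<in> rl_trees {a..b}"
proof -
  have dc: "disjoint_children L cs" and lab: "node_labels L cs = {Suc a..b}"
    using assms(1) by (auto simp: rl_roots_def)
  have "a \<notin> labels c" if "c \<in># cs" for c
    using child_labels_subset[OF that, of L] lab by auto
  with dc have "disjoint_children (insert a L) cs" by (auto simp: disjoint_children_def)
  moreover have "node_labels (insert a L) cs = {a..b}" using lab assms(2) by auto
  ultimately show ?thesis by (auto simp: Node_in_rl_trees_interval)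
qed

lemma Node_add_min_child_in_rl_trees:
  assumes c: "c \<in> rl_trees {a..m}" and rest: "(L, cs) \<in> rl_roots {Suc m..b}"
    and "a \<le> m" "m < b"
  shows "Node L (add_mset c cs) \<in> rl_trees {a..b}"
proof -
  have dc: "disjoint_children L cs" and lab: "node_labels L cs = {Suc m..b}"
    using rest by (auto simp: rl_roots_def)
  have "rl_tree c" and lab_c: "labels c = {a..m}" using c by (auto simp: rl_trees_def)
  moreover have "L \<inter> labels c = {}"
  proof -
    have "L \<subseteq> {Suc m..b}" using lab unfolding node_labels_def by blast
    then show ?thesis using lab_c by auto
  qed
  moreover have "labels c \<inter> labels d = {}" if "d \<in># cs" for d
  proof -
    have "labels d \<subseteq> {Suc m..b}" using that lab child_labels_subset by blast
    then show ?thesis using lab_c by auto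
  qed
  ultimately have "disjoint_children L (add_mset c cs)"
    using dc by (simp add: disjoint_children_add_mset)
  moreover have "node_labels L (add_mset c cs) = {a..b}" using lab lab_c assms(3,4) by auto
  moreover have "L = {} \<longrightarrow> cs \<noteq> {#}"
    using node_labels_eq_empty_iff[OF dc] lab assms(4) by auto
  ultimately show ?thesis by (auto simp: Node_in_rl_trees_interval Suc_le_eq nonempty_has_size)
qed

lemma rl_trees_min_in_root:
  assumes t: "Node L cs \<in> rl_trees {a..b}" and "a \<in> L"
  shows "(L - {a}, cs) \<in> rl_roots {Suc a..b}"
proof -
  have dc: "disjoint_children L cs" and lab: "node_labels L cs = {a..b}"
    using t by (auto simp: Node_in_rl_trees_interval)
  have "a \<notin> labels c" if "c \<in># cs" for c
    using dc that \<open>a \<in> L\<close> by (auto simp: disjoint_children_def)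
  then have "node_labels (L - {a}) cs = {a..b} - {a}"
    using lab \<open>a \<in> L\<close> by (auto simp: node_labels_def)
  also have "\<dots> = {Suc a..b}" by auto
  finally show ?thesis
    using dc by (auto simp: rl_roots_def disjoint_children_def)
qed

lemma rl_tree_labels_interval: "rl_tree t \<Longrightarrow> \<exists>x y. labels t = {x..y}"
  by (cases t) (simp add: rl_tree_def)

lemma rl_trees_min_in_child:
  assumes t: "Node L cs \<in> rl_trees {a..b}" and "a \<notin> L"
  obtains c cs' m where "cs = add_mset c cs'" "a \<le> m" "m < b"
    "c \<in> rl_trees {a..m}" "(L, cs') \<in> rl_roots {Suc m..b}"
proof -
  have size: "L = {} \<longrightarrow> 2 \<le> size cs" and dc: "disjoint_children L cs"
    and lab: "node_labels L cs = {a..b}"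
    using t by (auto simp: Node_in_rl_trees_interval)
  have "{a..b} \<noteq> {}" using t by (rule rl_trees_nonempty_labels)
  with lab \<open>a \<notin> L\<close> obtain c where c: "c \<in># cs" and "a \<in> labels c"
    by (auto simp: node_labels_def)
  from c obtain cs' where cs: "cs = add_mset c cs'" by (rule mset_add)
  with dc have dc': "disjoint_children L cs'" "rl_tree c" "L \<inter> labels c = {}"
    "\<forall>d\<in>#cs'. labels c \<inter> labels d = {}"
    by (simp_all add: disjoint_children_add_mset)
  obtain x m where lab_c: "labels c = {x..m}"
    using rl_tree_labels_interval[OF dc'(2)] by blast
  have lab_split: "labels c \<union> node_labels L cs' = {a..b}" using lab cs by simp
  then have "{x..m} \<subseteq> {a..b}" using lab_c by blast
  moreover have "x \<le> a" "a \<le> m" using \<open>a \<in> labels c\<close> lab_c by auto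
  ultimately have "x = a" "m \<le> b" by auto
  have "node_labels L cs' \<inter> labels c = {}" using dc' by (auto simp: node_labels_def)
  with lab_split have "node_labels L cs' = {a..b} - labels c" by blast
  also have "\<dots> = {Suc m..b}" using lab_c \<open>x = a\<close> \<open>a \<le> m\<close> by auto
  finally have rest: "node_labels L cs' = {Suc m..b}" .
  have "m \<noteq> b" \<comment> \<open>otherwise the root would be unlabelled with a single child\<close>
  proof
    assume "m = b"
    with rest node_labels_eq_empty_iff[OF dc'(1)] have "L = {}" "cs' = {#}" by auto
    with size cs show False by simp
  qed
  show thesis
  proof (rule that)
    show "c \<in> rl_trees {a..m}" using dc'(2) lab_c \<open>x = a\<close> by (simp add: rl_trees_def)
    show "(L, cs') \<in> rl_roots {Suc m..b}" using dc'(1) rest by (simp add: rl_roots_def)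
  qed (use cs \<open>a \<le> m\<close> \<open>m \<le> b\<close> \<open>m \<noteq> b\<close> in auto)
qed

lemma min_child_unique:
  assumes "add_mset c cs = add_mset c' cs'" "a \<in> labels c"
    and "(L', cs') \<in> rl_roots {Suc m'..b}" "a \<le> m'"
  shows "c = c'"
proof (rule ccontr)
  assume "c \<noteq> c'"
  with assms(1) have "c \<in># cs'" by (metis insert_noteq_member)
  then have "labels c \<subseteq> {Suc m'..b}" using assms(3) by (auto simp: rl_roots_def node_labels_def)
  with assms(2,4) show False by auto
qed

lemma rl_trees_decompose:
  assumes "a \<le> b"
  shows "rl_trees {a..b} =
    (\<lambda>(L, cs). Node (insert a L) cs) ` rl_roots {Suc a..b} \<union>
    (\<lambda>(c, L, cs). Node L (add_mset c cs)) ` (\<Union>m\<in>{a..<b}. rl_trees {a..m} \<times> rl_roots {Suc m..b})"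
    (is "_ = ?root ` _ \<union> ?child ` _")
proof (intro equalityI subsetI)
  fix t assume t: "t \<in> rl_trees {a..b}"
  obtain L cs where t_eq: "t = Node L cs" by (cases t)
  show "t \<in> ?root ` rl_roots {Suc a..b} \<union> ?child ` (\<Union>m\<in>{a..<b}. rl_trees {a..m} \<times> rl_roots {Suc m..b})"
  proof (cases "a \<in> L")
    case True
    then have "t = ?root (L - {a}, cs)" by (simp add: t_eq insert_absorb)
    moreover have "(L - {a}, cs) \<in> rl_roots {Suc a..b}"
      using rl_trees_min_in_root t True by (simp add: t_eq)
    ultimately show ?thesis by blast
  next
    case False
    with t obtain c cs' m where "cs = add_mset c cs'" "a \<le> m" "m < b"
      "c \<in> rl_trees {a..m}" "(L, cs') \<in> rl_roots {Suc m..b}"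
      unfolding t_eq by (rule rl_trees_min_in_child)
    then have "t = ?child (c, L, cs')" "(c, L, cs') \<in> (\<Union>m\<in>{a..<b}. rl_trees {a..m} \<times> rl_roots {Suc m..b})"
      by (auto simp: t_eq)
    then show ?thesis by blast
  qed
next
  fix t
  assume "t \<in> ?root ` rl_roots {Suc a..b} \<union> ?child ` (\<Union>m\<in>{a..<b}. rl_trees {a..m} \<times> rl_roots {Suc m..b})"
  then show "t \<in> rl_trees {a..b}"
    using assms Node_insert_min_in_rl_trees Node_add_min_child_in_rl_trees by auto
qed

lemma finite_rl_trees: "finite (rl_trees {a..b})"
proof (induction "b - a" arbitrary: a b rule: less_induct)
  case less
  show ?case
  proof (cases "a \<le> b")
    case True
    have trees: "finite (rl_trees {x..y})" if "a \<le> x" "y \<le> b" "a < x \<or> y < b" for x y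
    proof (cases "x \<le> y")
      case True
      with that show ?thesis by (intro less) auto
    qed simp
    have "finite (rl_roots {x..y})" if "a \<le> x" "y \<le> b" "a < x \<or> y < b" for x y
      using trees[OF that] by (rule card_rl_roots(1))
    with trees show ?thesis
      by (subst rl_trees_decompose[OF True]) auto
  qed simp
qed

lemma finite_rl_roots: "finite (rl_roots {x..y})"
  using finite_rl_trees by (rule card_rl_roots(1))

lemma card_rl_trees_decompose:
  assumes "a \<le> b"
  shows "card (rl_trees {a..b}) =
    card (rl_roots {Suc a..b}) + (\<Sum>m\<in>{a..<b}. card (rl_trees {a..m}) * card (rl_roots {Suc m..b}))"
proof -
  define root where "root = (\<lambda>(L, cs). Node (insert a L) cs)"
  define child where "child = (\<lambda>(c :: rwtree, L :: nat set, cs). Node L (add_mset c cs))"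
  define U where "U = (\<Union>m\<in>{a..<b}. rl_trees {a..m} \<times> rl_roots {Suc m..b})"
  have root_labels: "a \<notin> L" if "(L, cs) \<in> rl_roots {Suc m..b}" "a \<le> m" for L cs m
  proof -
    have "L \<subseteq> {Suc m..b}" using that(1) unfolding rl_roots_def node_labels_def by blast
    with that(2) show ?thesis by auto
  qed
  have "inj_on root (rl_roots {Suc a..b})"
    using root_labels[of _ _ a] by (auto simp: inj_on_def root_def insert_ident)
  then have card_root: "card (root ` rl_roots {Suc a..b}) = card (rl_roots {Suc a..b})"
    by (rule card_image)
  have "inj_on child U"
  proof (rule inj_onI)
    fix u v assume "u \<in> U" "v \<in> U" "child u = child v"
    then obtain c L cs m c' L' cs' m' where u: "u = (c, L, cs)" and v: "v = (c', L', cs')"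
      and "c \<in> rl_trees {a..m}" "a \<le> m" "(L', cs') \<in> rl_roots {Suc m'..b}" "a \<le> m'"
      and eq: "L = L'" "add_mset c cs = add_mset c' cs'"
      by (auto simp: U_def child_def)
    then have "c = c'" by (intro min_child_unique[of c cs c' cs' a L' m' b]) (auto simp: rl_trees_def)
    with eq show "u = v" by (simp add: u v)
  qed
  then have card_child: "card (child ` U) = card U" by (rule card_image)
  have card_U: "card U = (\<Sum>m\<in>{a..<b}. card (rl_trees {a..m}) * card (rl_roots {Suc m..b}))"
    unfolding U_def
  proof (subst card_UN_disjoint)
    show "\<forall>m\<in>{a..<b}. \<forall>m'\<in>{a..<b}. m \<noteq> m' \<longrightarrow>
        (rl_trees {a..m} \<times> rl_roots {Suc m..b}) \<inter> (rl_trees {a..m'} \<times> rl_roots {Suc m'..b}) = {}"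
      by (auto simp: rl_trees_def)
  qed (simp_all add: finite_rl_trees finite_rl_roots card_cartesian_product)
  have disjoint: "root ` rl_roots {Suc a..b} \<inter> child ` U = {}"
    using root_labels by (fastforce simp: root_def child_def U_def)
  have decompose: "rl_trees {a..b} = root ` rl_roots {Suc a..b} \<union> child ` U"
    unfolding root_def child_def U_def by (rule rl_trees_decompose[OF assms])
  have "finite (root ` rl_roots {Suc a..b})" "finite (child ` U)"
    by (simp_all add: U_def finite_rl_roots finite_rl_trees)
  with disjoint card_root card_child card_U show ?thesis
    by (simp add: decompose card_Un_disjoint)
qed

section \<open>The generating function\<close>

lemma card_rl_roots_interval: "card (rl_roots {Suc m..n}) = 2 * r (n - m) + (if n \<le> m then 1 else 0)"
  using card_rl_roots(2)[OF finite_rl_trees, of "Suc m" n] by (simp add: card_rl_trees_interval)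

lemma r_Suc:
  "r (Suc k) = (if k = 0 then 1 else 0) + 2 * r k + 2 * (\<Sum>m\<in>{1..<Suc k}. r m * r (Suc k - m))"
proof -
  have "r (Suc k) = card (rl_roots {Suc 1..Suc k}) +
      (\<Sum>m\<in>{1..<Suc k}. card (rl_trees {1..m}) * card (rl_roots {Suc m..Suc k}))"
    unfolding r_eq_card by (rule card_rl_trees_decompose) simp
  also have "\<dots> = (if k = 0 then 1 else 0) + 2 * r k + (\<Sum>m\<in>{1..<Suc k}. r m * (2 * r (Suc k - m)))"
    by (auto simp: card_rl_roots_interval r_eq_card intro!: sum.cong)
  finally show ?thesis by (simp add: sum_distrib_left mult.left_commute)
qed

unbundle fps_syntax

lemma fps_mult_nth_no_constant:
  fixes f g :: "'a::comm_semiring_1 fps"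
  assumes "f $ 0 = 0" and "g $ 0 = 0"
  shows "(f * g) $ n = (\<Sum>i\<in>{1..<n}. f $ i * g $ (n - i))"
proof -
  have "(f * g) $ n = (\<Sum>i\<in>{0..n}. f $ i * g $ (n - i))" by (rule fps_mult_nth)
  also have "\<dots> = (\<Sum>i\<in>{1..<n}. f $ i * g $ (n - i))"
    using assms by (intro sum.mono_neutral_right) (auto simp: Suc_le_eq)
  finally show ?thesis .
qed

theorem mainTheorem7:
  fixes F :: "int fps"
  assumes "F = Abs_fps (\<lambda>n. if n = 0 then 0 else int (r n))"
  shows "F = fps_X + 2 * fps_X * F + 2 * F ^ 2"
proof (rule fps_ext)
  fix n
  have F: "F $ k = int (r k)" for k
    using assms by (simp add: r_0)
  show "F $ n = (fps_X + 2 * fps_X * F + 2 * F ^ 2) $ n"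
  proof (cases n)
    case (Suc k)
    have "(F ^ 2) $ n = (\<Sum>m\<in>{1..<Suc k}. int (r m) * int (r (Suc k - m)))"
      by (simp add: power2_eq_square fps_mult_nth_no_constant F r_0 Suc)
    then show ?thesis
      by (simp add: Suc F r_0 r_Suc fps_numeral_fps_const mult.assoc sum_distrib_left)
  qed (simp add: F r_0)
qed

end
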